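(* Let $N$ be a positive integer, let $p_1,\ldots,p_N$ be independent beta-distributed random variables whose parameters are all at least $1$, for each $n$ let $\hat{p}_n$ be independent of everything else and distributed identically to $p_n$, and for each $n$ let $b_n$ be distributed, conditionally on $p_n$, as $\mathrm{Bern}(p_n)$. Then for all $\delta\in(0,1)$, $$\mathbb{E}\left[\min_{n \in \{1,\ldots,N\}} \left(\sqrt{6\, \mathbb{I}(p_n; b_n) \log \frac{2 N}{\delta}} - |p_n - \hat{p}_n| + \delta \right) \right] \geq 0.$$
   Context: $\mathbb{I}(p_n;b_n)$ denotes the mutual information between $p_n$ and $b_n$ (a nonnegative real number). *)

theory Defs
  imports "HOL-Probability.Probability"
begin

definition beta_density :: "real \<Rightarrow> real \<Rightarrow> real \<Rightarrow> real" where
  "beta_density a b x =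
     (if 0 < x \<and> x < 1 then x powr (a - 1) * (1 - x) powr (b - 1) / Beta a b else 0)"

text \<open>Joint density of (p, b) where p ~ Beta(a,b) and, conditionally on p, b ~ Bern(p),
  w.r.t. lborel \<otimes> counting measure on bool (True = 1).\<close>
definition beta_bern_density :: "real \<Rightarrow> real \<Rightarrow> real \<times> bool \<Rightarrow> real" where
  "beta_bern_density a b z =
     beta_density a b (fst z) * (if snd z then fst z else 1 - fst z)"

end

theory Submission
  imports Defs
begin

(* For the n-th pair write D = p - ph, I for the mutual information of p and b, nu = alpha + beta
   and s = sqrt (6 I log (2 N / delta)). If every |D| - s has an a.s. nonnegative majorant g with
   E g <= delta / N, the minimum is a.s. at least delta minus the sum of these majorants, so its
   expectation is nonnegative. The majorant is g = exp (l (D - s)) + exp (l (- D - s)) with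
   l = 2 nu s, and E g <= 2 exp (- nu s^2) <= delta / N follows from two facts about
   Beta(alpha, beta) with alpha, beta >= 1:

   - It is sub-Gaussian with variance proxy 1 / (4 nu). By Stein's identity
     E ((alpha - nu X) phi X + X (1 - X) phi' X) = 0, the function S l = E exp (l (X - m)),
     m = alpha / nu, satisfies nu S' l = l E (X (1 - X) exp (l (X - m))) <= l S l / 4, so
     ln S l <= l^2 / (8 nu); by independence E exp (t D) <= exp (t^2 / (4 nu)).

   - 6 nu I >= 1. The mutual information is E KL (Bern p || Bern m), and the Bernoulli KL
     divergence dominates a cubic polynomial in p - m whose expectation is computed from the
     first three moments of the Beta law. *)

section \<open>The Beta kernel\<close>

text \<open>Exponent-zero factors are written as \<open>1\<close>: since \<open>0 powr 0 = 0\<close>, the plain formula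
  would be discontinuous at an endpoint when \<open>a = 1\<close> or \<open>b = 1\<close>.\<close>

definition beta_kernel :: "real \<Rightarrow> real \<Rightarrow> real \<Rightarrow> real" where
  "beta_kernel a b x =
     (if a = 1 then 1 else x powr (a - 1)) * (if b = 1 then 1 else (1 - x) powr (b - 1))"

lemma beta_kernel_eq_powr:
  "0 < x \<Longrightarrow> x < 1 \<Longrightarrow> beta_kernel a b x = x powr (a - 1) * (1 - x) powr (b - 1)"
  by (auto simp: beta_kernel_def)

lemma beta_density_eq_kernel:
  "beta_density a b x = indicator {0<..<1} x * beta_kernel a b x / Beta a b"
  by (auto simp: beta_density_def beta_kernel_eq_powr)

lemma beta_kernel_nonneg: "0 \<le> beta_kernel a b x"
  by (simp add: beta_kernel_def)

lemma beta_kernel_le_1: "1 \<le> a \<Longrightarrow> 1 \<le> b \<Longrightarrow> x \<in> {0..1} \<Longrightarrow> beta_kernel a b x \<le> 1"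
  by (auto simp: beta_kernel_def intro!: mult_le_one powr_le1)

lemma continuous_on_beta_kernel:
  "1 \<le> a \<Longrightarrow> 1 \<le> b \<Longrightarrow> continuous_on {0..1} (beta_kernel a b)"
  unfolding beta_kernel_def
  by (cases "a = 1"; cases "b = 1") (auto intro!: continuous_intros continuous_on_powr')

lemma Beta_real_pos: "0 < a \<Longrightarrow> 0 < b \<Longrightarrow> 0 < Beta a (b::real)"
  by (simp add: Beta_def Gamma_real_pos)

lemma has_integral_beta_kernel:
  "0 < a \<Longrightarrow> 0 < b \<Longrightarrow> (beta_kernel a b has_integral Beta a b) {0..1}"
  by (rule has_integral_spike[OF negligible_finite[of "{0, 1}"] _ has_integral_Beta_real])
     (auto simp: beta_kernel_eq_powr)

lemma powr_eq_powr_minus_one_mult: "0 < (x::real) \<Longrightarrow> x powr a = x powr (a - 1) * x"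
  using powr_add[of x "a - 1" 1] by simp

lemma beta_kernel_shift_left:
  "0 < x \<Longrightarrow> x < 1 \<Longrightarrow> beta_kernel (a + 1) b x = x * beta_kernel a b x"
  by (simp add: beta_kernel_eq_powr powr_eq_powr_minus_one_mult[of x a])

lemma beta_kernel_shift_right:
  "0 < x \<Longrightarrow> x < 1 \<Longrightarrow> beta_kernel a (b + 1) x = (1 - x) * beta_kernel a b x"
  by (simp add: beta_kernel_eq_powr powr_eq_powr_minus_one_mult[of "1 - x" b])

lemma has_integral_mult_beta_kernel:
  assumes "0 < a" "0 < b"
  shows "((\<lambda>x. x * beta_kernel a b x) has_integral a / (a + b) * Beta a b) {0..1}"
    and "((\<lambda>x. (1 - x) * beta_kernel a b x) has_integral b / (a + b) * Beta a b) {0..1}"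
proof -
  have nonpos: "a \<notin> \<int>\<^sub>\<le>\<^sub>0" "b \<notin> \<int>\<^sub>\<le>\<^sub>0"
    using assms nonpos_Ints_nonpos by force+
  have "((\<lambda>x. x * beta_kernel a b x) has_integral Beta (a + 1) b) {0..1}"
    by (rule has_integral_spike[OF negligible_finite[of "{0, 1}"] _ has_integral_beta_kernel])
       (use assms in \<open>auto simp: beta_kernel_shift_left\<close>)
  moreover have "((\<lambda>x. (1 - x) * beta_kernel a b x) has_integral Beta a (b + 1)) {0..1}"
    by (rule has_integral_spike[OF negligible_finite[of "{0, 1}"] _ has_integral_beta_kernel])
       (use assms in \<open>auto simp: beta_kernel_shift_right\<close>)
  moreover have "Beta (a + 1) b = a / (a + b) * Beta a b" "Beta a (b + 1) = b / (a + b) * Beta a b"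
    using Beta_plus1_left[OF nonpos(1), of b] Beta_plus1_right[OF nonpos(2), of a] assms
    by (simp_all add: field_simps)
  ultimately show "((\<lambda>x. x * beta_kernel a b x) has_integral a / (a + b) * Beta a b) {0..1}"
    and "((\<lambda>x. (1 - x) * beta_kernel a b x) has_integral b / (a + b) * Beta a b) {0..1}"
    by simp_all
qed

lemma has_integral_beta_kernel_stein:
  fixes \<phi> \<phi>' :: "real \<Rightarrow> real"
  assumes "1 \<le> a" "1 \<le> b" and \<phi>: "\<And>x. (\<phi> has_real_derivative \<phi>' x) (at x)"
  shows "((\<lambda>x. beta_kernel a b x * ((a - (a + b) * x) * \<phi> x + x * (1 - x) * \<phi>' x))
           has_integral 0) {0..1}"
proof -
  define H where "H x = x powr a * (1 - x) powr b * \<phi> x" for x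
  \<comment> \<open>The integrand is \<open>H'\<close>, and \<open>H\<close> vanishes at both ends.\<close>
  have "continuous_on UNIV \<phi>"
    using \<phi> by (meson DERIV_isCont continuous_at_imp_continuous_on)
  then have "continuous_on {0..1} H"
    unfolding H_def using assms
    by (intro continuous_intros continuous_on_powr') (auto elim: continuous_on_subset)
  moreover have "(H has_vector_derivative
      beta_kernel a b x * ((a - (a + b) * x) * \<phi> x + x * (1 - x) * \<phi>' x)) (at x)"
    if "x \<in> {0<..<1}" for x
  proof -
    have x: "0 < x" "0 < 1 - x" using that by auto
    have "(H has_real_derivative
        a * x powr (a - 1) * (1 - x) powr b * \<phi> x - b * x powr a * (1 - x) powr (b - 1) * \<phi> x
        + x powr a * (1 - x) powr b * \<phi>' x) (at x)"
      unfolding H_def using x by (auto intro!: derivative_eq_intros \<phi> simp: algebra_simps)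
    also have "a * x powr (a - 1) * (1 - x) powr b * \<phi> x - b * x powr a * (1 - x) powr (b - 1) * \<phi> x
        + x powr a * (1 - x) powr b * \<phi>' x
        = beta_kernel a b x * ((a - (a + b) * x) * \<phi> x + x * (1 - x) * \<phi>' x)"
      using x by (simp add: beta_kernel_eq_powr powr_eq_powr_minus_one_mult[of x a]
          powr_eq_powr_minus_one_mult[of "1 - x" b] algebra_simps)
    finally show ?thesis
      by (simp add: has_real_derivative_iff_has_vector_derivative)
  qed
  ultimately have "((\<lambda>x. beta_kernel a b x * ((a - (a + b) * x) * \<phi> x + x * (1 - x) * \<phi>' x))
      has_integral (H 1 - H 0)) {0..1}"
    by (intro fundamental_theorem_of_calculus_interior) auto
  moreover have "H 1 = 0" "H 0 = 0" using assms by (auto simp: H_def)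
  ultimately show ?thesis by simp
qed

lemma has_real_derivative_integral_mult_exp:
  fixes w u :: "real \<Rightarrow> real"
  assumes w: "continuous_on {c..d} w" and u: "continuous_on {c..d} u"
  shows "((\<lambda>l. integral {c..d} (\<lambda>t. w t * exp (l * u t))) has_real_derivative
           integral {c..d} (\<lambda>t. w t * (u t * exp (l * u t)))) (at l)"
proof -
  have "continuous_on (UNIV \<times> {c..d}) (\<lambda>z. w (snd z))" "continuous_on (UNIV \<times> {c..d}) (\<lambda>z. u (snd z))"
    by (auto intro!: continuous_on_compose2[OF w] continuous_on_compose2[OF u] continuous_intros)
  then have "continuous_on (UNIV \<times> {c..d}) (\<lambda>(l, t). w t * (u t * exp (l * u t)))"
    by (simp add: split_beta, intro continuous_intros)
  moreover have "(\<lambda>t. w t * exp (l * u t)) integrable_on {c..d}" for l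
    using w u by (intro integrable_continuous_interval continuous_intros)
  ultimately have "((\<lambda>l. integral (cbox c d) (\<lambda>t. w t * exp (l * u t))) has_real_derivative
      integral (cbox c d) (\<lambda>t. w t * (u t * exp (l * u t)))) (at l within UNIV)"
    by (intro leibniz_rule_field_derivative) (auto intro!: derivative_eq_intros)
  then show ?thesis by simp
qed

lemma le_exp_quadratic_if_log_derivative_le:
  fixes S S' :: "real \<Rightarrow> real"
  assumes pos: "\<And>l. 0 < S l" and deriv: "\<And>l. (S has_real_derivative S' l) (at l)"
    and bound: "\<And>l. l * S' l \<le> c * l\<^sup>2 * S l"
  shows "S l \<le> S 0 * exp (c * l\<^sup>2 / 2)"
proof -
  define \<Phi> where "\<Phi> l = ln (S l) - c * l\<^sup>2 / 2" for l
  define \<Phi>' where "\<Phi>' l = S' l / S l - c * l" for l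
  have d\<Phi>: "(\<Phi> has_real_derivative \<Phi>' l) (at l)" for l
    unfolding \<Phi>_def \<Phi>'_def using pos[of l]
    by (auto intro!: derivative_eq_intros deriv simp: power2_eq_square field_simps)
  have sign: "z * \<Phi>' z \<le> 0" for z
  proof -
    have "z * \<Phi>' z = (z * S' z - c * z\<^sup>2 * S z) / S z"
      using pos[of z] by (simp add: \<Phi>'_def power2_eq_square field_simps)
    then show ?thesis using bound[of z] pos[of z] by (simp add: divide_nonpos_pos)
  qed
  have "\<Phi> l \<le> \<Phi> 0"
  proof (cases l "0 :: real" rule: linorder_cases)
    case less
    then obtain z where "l < z" "z < 0" "\<Phi> 0 - \<Phi> l = (0 - l) * \<Phi>' z"
      using MVT2[of l 0 \<Phi> \<Phi>'] d\<Phi> by blast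
    moreover have "0 \<le> \<Phi>' z" using sign[of z] \<open>z < 0\<close> by (simp add: mult_le_0_iff)
    ultimately show ?thesis using \<open>l < 0\<close> mult_nonpos_nonneg[of l "\<Phi>' z"] by simp
  next
    case greater
    then obtain z where "0 < z" "z < l" "\<Phi> l - \<Phi> 0 = (l - 0) * \<Phi>' z"
      using MVT2[of 0 l \<Phi> \<Phi>'] d\<Phi> by blast
    moreover have "\<Phi>' z \<le> 0" using sign[of z] \<open>0 < z\<close> by (simp add: mult_le_0_iff)
    ultimately show ?thesis using \<open>0 < l\<close> mult_nonneg_nonpos[of l "\<Phi>' z"] by simp
  qed simp
  then have "ln (S l) \<le> ln (S 0) + c * l\<^sup>2 / 2"
    by (simp add: \<Phi>_def)
  then have "S l \<le> exp (ln (S 0) + c * l\<^sup>2 / 2)"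
    using pos[of l] by (metis exp_le_cancel_iff exp_ln)
  then show ?thesis
    using pos[of 0] by (simp add: exp_add)
qed

lemma integral_beta_kernel_mult_exp_pos:
  assumes ab: "1 \<le> a" "1 \<le> b" and m: "0 \<le> m" "m \<le> 1"
  shows "0 < integral {0..1} (\<lambda>t. beta_kernel a b t * exp (l * (t - m)))"
proof -
  have "exp (- \<bar>l\<bar>) * Beta a b = integral {0..1} (\<lambda>t. exp (- \<bar>l\<bar>) * beta_kernel a b t)"
    using integral_unique[OF has_integral_beta_kernel[of a b]] ab by simp
  also have "\<dots> \<le> integral {0..1} (\<lambda>t. beta_kernel a b t * exp (l * (t - m)))"
  proof (rule integral_le)
    show "(\<lambda>t. exp (- \<bar>l\<bar>) * beta_kernel a b t) integrable_on {0..1}"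
      and "(\<lambda>t. beta_kernel a b t * exp (l * (t - m))) integrable_on {0..1}"
      by (intro integrable_continuous_interval continuous_intros continuous_on_beta_kernel ab)+
    fix t :: real
    assume "t \<in> {0..1}"
    with m have "\<bar>l * (t - m)\<bar> \<le> \<bar>l\<bar>"
      unfolding abs_mult by (intro mult_left_le) auto
    then have "exp (- \<bar>l\<bar>) \<le> exp (l * (t - m))" by simp
    from mult_right_mono[OF this beta_kernel_nonneg]
    show "exp (- \<bar>l\<bar>) * beta_kernel a b t \<le> beta_kernel a b t * exp (l * (t - m))"
      by (simp add: mult.commute)
  qed
  finally show ?thesis
    using ab Beta_real_pos[of a b] by (smt (verit) exp_gt_zero mult_pos_pos)
qed

lemma beta_kernel_mult_exp_stein:
  assumes ab: "1 \<le> a" "1 \<le> b"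
  defines "m \<equiv> a / (a + b)"
  shows "(a + b) * integral {0..1} (\<lambda>t. beta_kernel a b t * ((t - m) * exp (l * (t - m))))
           = l * integral {0..1} (\<lambda>t. beta_kernel a b t * (t * (1 - t) * exp (l * (t - m))))"
    (is "(a + b) * integral _ ?S' = l * integral _ ?G")
proof -
  have centre: "a - (a + b) * t = - ((a + b) * (t - m))" for t
    using ab by (simp add: m_def field_simps)
  have "((\<lambda>t. beta_kernel a b t * ((a - (a + b) * t) * exp (l * (t - m))
      + t * (1 - t) * (l * exp (l * (t - m))))) has_integral 0) {0..1}"
    by (rule has_integral_beta_kernel_stein[OF ab]) (auto intro!: derivative_eq_intros)
  moreover have "(\<lambda>t. beta_kernel a b t * ((a - (a + b) * t) * exp (l * (t - m))
      + t * (1 - t) * (l * exp (l * (t - m))))) = (\<lambda>t. l * ?G t - (a + b) * ?S' t)"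
    unfolding centre by (simp add: fun_eq_iff ring_distribs mult_ac)
  ultimately have zero: "((\<lambda>t. l * ?G t - (a + b) * ?S' t) has_integral 0) {0..1}"
    by (simp only:)
  have "?S' integrable_on {0..1}" "?G integrable_on {0..1}"
    by (intro integrable_continuous_interval continuous_intros continuous_on_beta_kernel ab)+
  then have "((\<lambda>t. l * ?G t - (a + b) * ?S' t) has_integral
      l * integral {0..1} ?G - (a + b) * integral {0..1} ?S') {0..1}"
    by (intro has_integral_diff has_integral_mult_right integrable_integral)
  with zero have "l * integral {0..1} ?G - (a + b) * integral {0..1} ?S' = 0"
    by (rule has_integral_unique[rotated])
  then show ?thesis by simp
qed

lemma beta_kernel_variance_factor_le:
  assumes ab: "1 \<le> a" "1 \<le> b"
  shows "integral {0..1} (\<lambda>t. beta_kernel a b t * (t * (1 - t) * exp (l * (t - m))))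
           \<le> integral {0..1} (\<lambda>t. beta_kernel a b t * exp (l * (t - m))) / 4"
proof -
  have "integral {0..1} (\<lambda>t. beta_kernel a b t * (t * (1 - t) * exp (l * (t - m))))
      \<le> integral {0..1} (\<lambda>t. 1 / 4 * (beta_kernel a b t * exp (l * (t - m))))"
  proof (rule integral_le)
    show "(\<lambda>t. beta_kernel a b t * (t * (1 - t) * exp (l * (t - m)))) integrable_on {0..1}"
      and "(\<lambda>t. 1 / 4 * (beta_kernel a b t * exp (l * (t - m)))) integrable_on {0..1}"
      by (intro integrable_continuous_interval continuous_intros continuous_on_beta_kernel ab)+
    fix t :: real
    have "t * (1 - t) \<le> 1 / 4"
      using zero_le_power2[of "t - 1 / 2"] by (simp add: power2_eq_square algebra_simps)
    then have "t * (1 - t) * exp (l * (t - m)) \<le> 1 / 4 * exp (l * (t - m))"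
      by (rule mult_right_mono) simp
    from mult_left_mono[OF this beta_kernel_nonneg]
    show "beta_kernel a b t * (t * (1 - t) * exp (l * (t - m)))
        \<le> 1 / 4 * (beta_kernel a b t * exp (l * (t - m)))"
      by (simp add: mult_ac)
  qed
  then show ?thesis by simp
qed

lemma beta_kernel_mgf_le:
  assumes ab: "1 \<le> a" "1 \<le> b"
  defines "m \<equiv> a / (a + b)"
  shows "integral {0..1} (\<lambda>t. beta_kernel a b t * exp (l * (t - m)))
           \<le> Beta a b * exp (l\<^sup>2 / (8 * (a + b)))"
proof -
  define S where "S l = integral {0..1} (\<lambda>t. beta_kernel a b t * exp (l * (t - m)))" for l
  define S' where "S' l = integral {0..1} (\<lambda>t. beta_kernel a b t * ((t - m) * exp (l * (t - m))))" for l
  have \<nu>: "0 < a + b" and m: "0 \<le> m" "m \<le> 1"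
    using ab by (simp_all add: m_def)
  have S_pos: "0 < S l" for l
    unfolding S_def using ab m by (rule integral_beta_kernel_mult_exp_pos)
  have dS: "(S has_real_derivative S' l) (at l)" for l
    unfolding S_def[abs_def] S'_def using ab
    by (intro has_real_derivative_integral_mult_exp continuous_on_beta_kernel continuous_intros)
  have "l * S' l \<le> 1 / (4 * (a + b)) * l\<^sup>2 * S l" for l
  proof -
    have "l * S' l
        = l\<^sup>2 * integral {0..1} (\<lambda>t. beta_kernel a b t * (t * (1 - t) * exp (l * (t - m)))) / (a + b)"
      using beta_kernel_mult_exp_stein[OF ab, of l, folded m_def] \<nu>
      by (simp add: S'_def power2_eq_square field_simps)
    also have "\<dots> \<le> l\<^sup>2 * (S l / 4) / (a + b)"
      unfolding S_def using \<nu>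
      by (intro divide_right_mono mult_left_mono beta_kernel_variance_factor_le ab) auto
    also have "\<dots> = 1 / (4 * (a + b)) * l\<^sup>2 * S l"
      by simp
    finally show ?thesis .
  qed
  from le_exp_quadratic_if_log_derivative_le[OF S_pos dS this]
  have "S l \<le> S 0 * exp (l\<^sup>2 / (8 * (a + b)))"
    by (simp add: mult.commute)
  moreover have "S 0 = Beta a b"
    using has_integral_beta_kernel[of a b] ab by (simp add: S_def integral_unique)
  ultimately show ?thesis by (simp add: S_def)
qed

section \<open>Bernoulli relative entropy\<close>

definition bernoulli_kl :: "real \<Rightarrow> real \<Rightarrow> real" where
  "bernoulli_kl x m = x * ln (x / m) + (1 - x) * ln ((1 - x) / (1 - m))"

definition kl_cubic_minorant :: "real \<Rightarrow> real \<Rightarrow> real" where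
  "kl_cubic_minorant x m =
     3 / (8 * m * (1 - m)) * (x - m)\<^sup>2 + (2 * m - 1) / (24 * m\<^sup>2 * (1 - m)\<^sup>2) * (x - m) ^ 3"

lemma nonneg_if_second_derivative_nonneg:
  fixes f f' f'' :: "real \<Rightarrow> real"
  assumes f: "\<And>t. t \<in> {c<..<d} \<Longrightarrow> (f has_real_derivative f' t) (at t)"
    and f': "\<And>t. t \<in> {c<..<d} \<Longrightarrow> (f' has_real_derivative f'' t) (at t)"
    and f'': "\<And>t. t \<in> {c<..<d} \<Longrightarrow> 0 \<le> f'' t"
    and m: "m \<in> {c<..<d}" "f m = 0" "f' m = 0" and x: "x \<in> {c<..<d}"
  shows "0 \<le> f x"
proof -
  have f'_mono: "f' y \<le> f' z" if "y \<in> {c<..<d}" "z \<in> {c<..<d}" "y \<le> z" for y z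
    using that by (intro DERIV_nonneg_imp_nondecreasing[of y z f']) (auto intro!: exI[of _ "f'' _"] f' f'')
  show ?thesis
  proof (cases "x \<le> m")
    case True
    have "f m \<le> f x"
      using True m x f'_mono[of _ m]
      by (intro DERIV_nonpos_imp_nonincreasing[of x m f]) (auto intro!: exI f)
    with m show ?thesis by simp
  next
    case False
    have "f m \<le> f x"
      using False m x f'_mono[of m]
      by (intro DERIV_nonneg_imp_nondecreasing[of m x f]) (auto intro!: exI f)
    with m show ?thesis by simp
  qed
qed

text \<open>The left-hand side is the sum of the tangents of the convex functions \<open>1 / t\<close> at
  \<open>t = 2 m\<close> and \<open>1 / (1 - t)\<close> at \<open>1 - t = 2 (1 - m)\<close>.\<close>

lemma kl_cubic_minorant_curvature_le:
  fixes m t :: real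
  assumes m: "0 < m" "m < 1" and t: "0 < t" "t < 1"
  shows "3 / (4 * m * (1 - m)) + (2 * m - 1) / (4 * m\<^sup>2 * (1 - m)\<^sup>2) * (t - m)
           \<le> 1 / t + 1 / (1 - t)"
proof -
  have tangent: "1 / s - u / (4 * s\<^sup>2) \<le> 1 / u" if "0 < s" "0 < u" for s u :: real
  proof -
    have "0 \<le> (2 * s - u)\<^sup>2 / (4 * s\<^sup>2 * u)" using that by simp
    also have "\<dots> = 1 / u - (1 / s - u / (4 * s\<^sup>2))"
      using that by (simp add: field_simps power2_eq_square)
    finally show ?thesis by simp
  qed
  have "3 / (4 * m * (1 - m)) + (2 * m - 1) / (4 * m\<^sup>2 * (1 - m)\<^sup>2) * (t - m)
      = (1 / m - t / (4 * m\<^sup>2)) + (1 / (1 - m) - (1 - t) / (4 * (1 - m)\<^sup>2))"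
    using m by (simp add: divide_simps power2_eq_square; simp add: algebra_simps)
  also have "\<dots> \<le> 1 / t + 1 / (1 - t)"
    using tangent[of m t] tangent[of "1 - m" "1 - t"] m t by simp
  finally show ?thesis .
qed

lemma kl_cubic_minorant_le_bernoulli_kl:
  assumes m: "0 < m" "m < 1" and x: "0 < x" "x < 1"
  shows "kl_cubic_minorant x m \<le> bernoulli_kl x m"
proof -
  define f' where "f' t = ln (t / m) - ln ((1 - t) / (1 - m))
      - (3 / (4 * m * (1 - m)) * (t - m) + (2 * m - 1) / (8 * m\<^sup>2 * (1 - m)\<^sup>2) * (t - m)\<^sup>2)" for t
  define f'' where "f'' t = 1 / t + 1 / (1 - t)
      - (3 / (4 * m * (1 - m)) + (2 * m - 1) / (4 * m\<^sup>2 * (1 - m)\<^sup>2) * (t - m))" for t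
  have nz: "m \<noteq> 0" "1 - m \<noteq> 0" "m - 1 \<noteq> 0" using m by auto
  have "0 \<le> bernoulli_kl x m - kl_cubic_minorant x m"
  proof (rule nonneg_if_second_derivative_nonneg[where f = "\<lambda>t. bernoulli_kl t m - kl_cubic_minorant t m"
        and f' = f' and f'' = f'' and c = 0 and d = 1 and m = m])
    fix t :: real
    assume t: "t \<in> {0<..<1}"
    then show "((\<lambda>t. bernoulli_kl t m - kl_cubic_minorant t m) has_real_derivative f' t) (at t)"
      unfolding bernoulli_kl_def kl_cubic_minorant_def f'_def using m nz
      by (auto intro!: derivative_eq_intros simp: power2_eq_square)
         (simp add: divide_simps; simp add: algebra_simps)
    show "(f' has_real_derivative f'' t) (at t)"
      unfolding f'_def f''_def using m nz t
      by (auto intro!: derivative_eq_intros simp: power2_eq_square)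
         (simp add: divide_simps; simp add: algebra_simps)
    show "0 \<le> f'' t"
      using kl_cubic_minorant_curvature_le[OF m] t by (simp add: f''_def)
  qed (use m x in \<open>auto simp: bernoulli_kl_def kl_cubic_minorant_def f'_def\<close>)
  then show ?thesis by simp
qed

lemma abs_mult_ln_div_le:
  fixes x m :: real
  assumes x: "0 < x" "x \<le> 1" and m: "0 < m"
  shows "\<bar>x * ln (x / m)\<bar> \<le> 1 + \<bar>ln m\<bar>"
proof -
  have "- (x * ln x) \<le> 1 - x"
    using ln_le_minus_one[of "1 / x"] x by (simp add: ln_div field_simps)
  moreover have "x * ln x \<le> 0"
    using x by (simp add: mult_nonneg_nonpos)
  moreover have "\<bar>x * ln m\<bar> \<le> \<bar>ln m\<bar>"
    using x by (simp add: abs_mult mult_left_le_one_le)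
  moreover have "x * ln (x / m) = x * ln x - x * ln m"
    using x m by (simp add: ln_div algebra_simps)
  ultimately show ?thesis using x by linarith
qed

lemma abs_bernoulli_kl_le:
  assumes "0 < m" "m < 1" "0 < x" "x < 1"
  shows "\<bar>bernoulli_kl x m\<bar> \<le> 2 + \<bar>ln m\<bar> + \<bar>ln (1 - m)\<bar>"
  using abs_mult_ln_div_le[of x m] abs_mult_ln_div_le[of "1 - x" "1 - m"] assms
  unfolding bernoulli_kl_def by simp

lemma beta_cubic_minorant_bound:
  fixes a b :: real
  assumes ab: "1 \<le> a" "1 \<le> b"
  shows "1 \<le> 6 * (a + b) * (3 / (8 * (a + b + 1)) - (a - b)\<^sup>2 / (12 * a * b * (a + b + 1) * (a + b + 2)))"
proof -
  define \<nu> where "\<nu> = a + b"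
  define P where "P = a * b"
  have \<nu>: "2 \<le> \<nu>" "0 < \<nu>" and P: "\<nu> - 1 \<le> P" "0 < P"
    using ab mult_nonneg_nonneg[of "a - 1" "b - 1"] by (auto simp: \<nu>_def P_def algebra_simps)
  \<comment> \<open>Clearing denominators, the claim reads \<open>P (10 \<nu>\<^sup>2 + 28 \<nu> - 16) \<ge> 4 \<nu>\<^sup>3\<close>.\<close>
  have diff: "(a - b)\<^sup>2 = \<nu>\<^sup>2 - 4 * P"
    by (simp add: \<nu>_def P_def power2_eq_square algebra_simps)
  have "0 \<le> 10 * \<nu>\<^sup>2 + 28 * \<nu> - 16"
    using \<nu> zero_le_square[of \<nu>] unfolding power2_eq_square by linarith
  then have "(\<nu> - 1) * (10 * \<nu>\<^sup>2 + 28 * \<nu> - 16) \<le> P * (10 * \<nu>\<^sup>2 + 28 * \<nu> - 16)"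
    using P by (intro mult_right_mono)
  moreover have "(\<nu> - 1) * (10 * \<nu>\<^sup>2 + 28 * \<nu> - 16) - 4 * \<nu> ^ 3 = 6 * \<nu> ^ 3 + 18 * \<nu>\<^sup>2 - 44 * \<nu> + 16"
    by (simp add: power2_eq_square power3_eq_cube algebra_simps)
  moreover have "12 * \<nu>\<^sup>2 \<le> 6 * \<nu> ^ 3" "4 * \<nu> \<le> 2 * \<nu>\<^sup>2"
    using \<nu> by (simp_all add: power2_eq_square power3_eq_cube mult_right_mono)
  ultimately have num: "0 \<le> P * (10 * \<nu>\<^sup>2 + 28 * \<nu> - 16) - 4 * \<nu> ^ 3"
    using \<nu> by linarith
  have "6 * \<nu> * (3 / (8 * (\<nu> + 1)) - (\<nu>\<^sup>2 - 4 * P) / (12 * P * (\<nu> + 1) * (\<nu> + 2))) - 1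
      = (P * (10 * \<nu>\<^sup>2 + 28 * \<nu> - 16) - 4 * \<nu> ^ 3) / (8 * P * (\<nu> + 1) * (\<nu> + 2))"
    using \<nu> P by (simp add: divide_simps power2_eq_square power3_eq_cube; simp add: algebra_simps)
  also have "\<dots> \<ge> 0"
    using num \<nu> P by simp
  finally show ?thesis
    by (simp add: diff \<nu>_def P_def mult.assoc)
qed

section \<open>Beta random variables\<close>

lemma beta_density_nonneg: "0 < a \<Longrightarrow> 0 < b \<Longrightarrow> 0 \<le> beta_density a b x"
  using Beta_real_pos[of a b] by (simp add: beta_density_eq_kernel beta_kernel_nonneg)

lemma
  fixes h :: "real \<Rightarrow> real"
  assumes "1 \<le> a" "1 \<le> b" and h: "continuous_on {0..1} h"
  shows integrable_beta_density_mult: "integrable lborel (\<lambda>x. beta_density a b x * h x)"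
    and integral_beta_density_mult:
      "(\<integral>x. beta_density a b x * h x \<partial>lborel) = integral {0..1} (\<lambda>x. beta_kernel a b x * h x) / Beta a b"
proof -
  have "set_integrable lborel {0..1} (\<lambda>x. beta_kernel a b x * h x)"
    using assms by (intro borel_integrable_atLeastAtMost' continuous_intros continuous_on_beta_kernel)
  then have int: "set_integrable lborel {0<..<1} (\<lambda>x. beta_kernel a b x * h x)"
    by (rule set_integrable_subset) auto
  have eq: "(\<lambda>x. beta_density a b x * h x)
      = (\<lambda>x. (indicator {0<..<1} x *\<^sub>R (beta_kernel a b x * h x)) / Beta a b)"
    by (simp add: beta_density_eq_kernel mult.assoc)
  show "integrable lborel (\<lambda>x. beta_density a b x * h x)"
    unfolding eq using int by (simp add: set_integrable_def)
  have "(\<integral>x. beta_density a b x * h x \<partial>lborel)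
      = (LINT x:{0<..<1}|lborel. beta_kernel a b x * h x) / Beta a b"
    unfolding eq set_lebesgue_integral_def by simp
  also have "\<dots> = integral {0..1} (\<lambda>x. beta_kernel a b x * h x) / Beta a b"
    by (simp add: set_borel_integral_eq_integral(2)[OF int] integral_open_interval_real)
  finally show "(\<integral>x. beta_density a b x * h x \<partial>lborel)
      = integral {0..1} (\<lambda>x. beta_kernel a b x * h x) / Beta a b" .
qed

locale beta_rv = prob_space M for M :: "'a measure" +
  fixes a b :: real and X :: "'a \<Rightarrow> real"
  assumes shape_ge_1: "1 \<le> a" "1 \<le> b"
    and distributed: "distributed M lborel X (\<lambda>x. ennreal (beta_density a b x))"
begin

lemma Beta_pos: "0 < Beta a b"
  using shape_ge_1 by (simp add: Beta_real_pos)

lemma measurable_X[measurable]: "X \<in> borel_measurable M"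
  using distributed_measurable[OF distributed] by simp

lemma AE_in_unit_interval: "AE \<omega> in M. 0 < X \<omega> \<and> X \<omega> < 1"
proof -
  have "AE x in density lborel (\<lambda>x. ennreal (beta_density a b x)). 0 < x \<and> x < 1"
    by (subst AE_density[OF distributed_borel_measurable[OF distributed]])
       (auto simp: beta_density_def)
  then show ?thesis
    unfolding distributed_distr_eq_density[OF distributed, symmetric]
    by (rule AE_distrD[OF distributed_measurable[OF distributed]])
qed

lemma
  fixes h :: "real \<Rightarrow> real"
  assumes h: "continuous_on UNIV h"
  shows integrable_comp: "integrable M (\<lambda>\<omega>. h (X \<omega>))"
    and expectation_comp:
      "expectation (\<lambda>\<omega>. h (X \<omega>)) = integral {0..1} (\<lambda>x. beta_kernel a b x * h x) / Beta a b"
proof -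
  have [measurable]: "h \<in> borel_measurable borel"
    using h by (rule borel_measurable_continuous_onI)
  have h01: "continuous_on {0..1} h"
    using h by (rule continuous_on_subset) simp
  have nonneg: "0 \<le> beta_density a b x" for x
    using shape_ge_1 by (simp add: beta_density_nonneg)
  show "integrable M (\<lambda>\<omega>. h (X \<omega>))"
    using integrable_beta_density_mult[OF shape_ge_1 h01] distributed_integrable[OF distributed]
    by (simp add: nonneg)
  show "expectation (\<lambda>\<omega>. h (X \<omega>)) = integral {0..1} (\<lambda>x. beta_kernel a b x * h x) / Beta a b"
    using integral_beta_density_mult[OF shape_ge_1 h01] distributed_integral[OF distributed]
    by (simp add: nonneg)
qed

lemma stein_identity:
  fixes \<phi> \<phi>' :: "real \<Rightarrow> real"
  assumes \<phi>: "\<And>x. (\<phi> has_real_derivative \<phi>' x) (at x)" and "continuous_on UNIV \<phi>'"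
  shows "expectation (\<lambda>\<omega>. (a - (a + b) * X \<omega>) * \<phi> (X \<omega>) + X \<omega> * (1 - X \<omega>) * \<phi>' (X \<omega>)) = 0"
proof -
  have "continuous_on UNIV \<phi>"
    using \<phi> by (meson DERIV_isCont continuous_at_imp_continuous_on)
  then show ?thesis
    using expectation_comp[where h="\<lambda>x. (a - (a + b) * x) * \<phi> x + x * (1 - x) * \<phi>' x"]
      integral_unique[OF has_integral_beta_kernel_stein[OF shape_ge_1 \<phi>]] assms(2)
    by (simp add: continuous_intros)
qed

lemma moment_recurrence:
  "(a + b + real k) * expectation (\<lambda>\<omega>. X \<omega> ^ Suc k) = (a + real k) * expectation (\<lambda>\<omega>. X \<omega> ^ k)"
proof -
  have "expectation (\<lambda>\<omega>. (a - (a + b) * X \<omega>) * X \<omega> ^ k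
      + X \<omega> * (1 - X \<omega>) * (real k * X \<omega> ^ (k - 1))) = 0"
    by (rule stein_identity) (auto intro!: derivative_eq_intros continuous_intros)
  moreover have "(a - (a + b) * x) * x ^ k + x * (1 - x) * (real k * x ^ (k - 1))
      = (a + real k) * x ^ k - (a + b + real k) * x ^ Suc k" for x
    by (cases k) (simp_all add: algebra_simps)
  moreover have "integrable M (\<lambda>\<omega>. X \<omega> ^ k)" "integrable M (\<lambda>\<omega>. X \<omega> ^ Suc k)"
    by (intro integrable_comp continuous_intros)+
  ultimately show ?thesis by simp
qed

lemma moment: "expectation (\<lambda>\<omega>. X \<omega> ^ k) = (\<Prod>j<k. (a + real j) / (a + b + real j))"
proof (induction k)
  case 0
  then show ?case by (simp add: prob_space)
next
  case (Suc k)
  have "0 < a + b + real k" using shape_ge_1 by simp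
  with moment_recurrence[of k] Suc show ?case by (simp add: field_simps)
qed

lemma central_moments:
  defines "m \<equiv> a / (a + b)"
  shows "expectation (\<lambda>\<omega>. (X \<omega> - m)\<^sup>2) = a * b / ((a + b)\<^sup>2 * (a + b + 1))"
    and "expectation (\<lambda>\<omega>. (X \<omega> - m) ^ 3) = 2 * a * b * (b - a) / ((a + b) ^ 3 * (a + b + 1) * (a + b + 2))"
proof -
  have nz: "a + b \<noteq> 0" "a + b + 1 \<noteq> 0" "a + b + 2 \<noteq> 0"
    using shape_ge_1 by simp_all
  have int: "integrable M (\<lambda>\<omega>. X \<omega> ^ k)" for k
    by (intro integrable_comp continuous_intros)
  have E1: "expectation X = a / (a + b)"
    using moment[of 1] by simp
  have E2: "expectation (\<lambda>\<omega>. X \<omega> ^ 2) = a * (a + 1) / ((a + b) * (a + b + 1))"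
    using moment[of 2] by (simp add: numeral_2_eq_2)
  have E3: "expectation (\<lambda>\<omega>. X \<omega> ^ 3) = a * (a + 1) * (a + 2) / ((a + b) * (a + b + 1) * (a + b + 2))"
    using moment[of 3] by (simp add: numeral_3_eq_3 field_simps)
  have "(\<lambda>\<omega>. (X \<omega> - m)\<^sup>2) = (\<lambda>\<omega>. X \<omega> ^ 2 - 2 * m * X \<omega> + m\<^sup>2)"
    by (simp add: power2_eq_square algebra_simps)
  then have "expectation (\<lambda>\<omega>. (X \<omega> - m)\<^sup>2) = expectation (\<lambda>\<omega>. X \<omega> ^ 2) - 2 * m * expectation X + m\<^sup>2"
    using int[of 1] int[of 2] by (simp add: prob_space)
  also have "\<dots> = a * b / ((a + b)\<^sup>2 * (a + b + 1))"
    unfolding E1 E2 m_def using nz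
    by (simp add: divide_simps power2_eq_square; simp add: algebra_simps)
  finally show "expectation (\<lambda>\<omega>. (X \<omega> - m)\<^sup>2) = a * b / ((a + b)\<^sup>2 * (a + b + 1))" .
  have "(\<lambda>\<omega>. (X \<omega> - m) ^ 3) = (\<lambda>\<omega>. X \<omega> ^ 3 - 3 * m * X \<omega> ^ 2 + 3 * m\<^sup>2 * X \<omega> - m ^ 3)"
    by (simp add: power2_eq_square power3_eq_cube algebra_simps)
  then have "expectation (\<lambda>\<omega>. (X \<omega> - m) ^ 3)
      = expectation (\<lambda>\<omega>. X \<omega> ^ 3) - 3 * m * expectation (\<lambda>\<omega>. X \<omega> ^ 2) + 3 * m\<^sup>2 * expectation X - m ^ 3"
    using int[of 1] int[of 2] int[of 3] by (simp add: prob_space)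
  also have "\<dots> = 2 * a * b * (b - a) / ((a + b) ^ 3 * (a + b + 1) * (a + b + 2))"
    unfolding E1 E2 E3 m_def using nz
    by (simp add: divide_simps power2_eq_square power3_eq_cube; simp add: algebra_simps)
  finally show "expectation (\<lambda>\<omega>. (X \<omega> - m) ^ 3)
      = 2 * a * b * (b - a) / ((a + b) ^ 3 * (a + b + 1) * (a + b + 2))" .
qed

lemma mgf_le: "expectation (\<lambda>\<omega>. exp (l * (X \<omega> - a / (a + b)))) \<le> exp (l\<^sup>2 / (8 * (a + b)))"
proof -
  have "expectation (\<lambda>\<omega>. exp (l * (X \<omega> - a / (a + b))))
      = integral {0..1} (\<lambda>t. beta_kernel a b t * exp (l * (t - a / (a + b)))) / Beta a b"
    by (rule expectation_comp) (intro continuous_intros)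
  also have "\<dots> \<le> exp (l\<^sup>2 / (8 * (a + b)))"
    using beta_kernel_mgf_le[OF shape_ge_1, of l] Beta_pos by (simp add: divide_le_eq mult.commute)
  finally show ?thesis .
qed

lemma expectation_kl_cubic_minorant:
  "expectation (\<lambda>\<omega>. kl_cubic_minorant (X \<omega>) (a / (a + b)))
     = 3 / (8 * (a + b + 1)) - (a - b)\<^sup>2 / (12 * a * b * (a + b + 1) * (a + b + 2))"
proof -
  define m where "m = a / (a + b)"
  have nz: "a \<noteq> 0" "b \<noteq> 0" "a + b \<noteq> 0" "a + b + 1 \<noteq> 0" "a + b + 2 \<noteq> 0"
    using shape_ge_1 by simp_all
  have m: "1 - m = b / (a + b)" and m01: "m \<noteq> 0" "m \<noteq> 1"
    using nz shape_ge_1 by (simp_all add: m_def field_simps)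
  have "expectation (\<lambda>\<omega>. kl_cubic_minorant (X \<omega>) m)
      = 3 / (8 * m * (1 - m)) * expectation (\<lambda>\<omega>. (X \<omega> - m)\<^sup>2)
        + (2 * m - 1) / (24 * m\<^sup>2 * (1 - m)\<^sup>2) * expectation (\<lambda>\<omega>. (X \<omega> - m) ^ 3)"
    unfolding kl_cubic_minorant_def
    by (subst Bochner_Integration.integral_add) (auto intro!: integrable_comp continuous_intros simp: m01)
  also have "\<dots> = 3 / (8 * (a + b + 1)) - (a - b)\<^sup>2 / (12 * a * b * (a + b + 1) * (a + b + 2))"
    unfolding central_moments[folded m_def] m unfolding m_def using nz
    by (simp add: divide_simps power2_eq_square power3_eq_cube; simp add: algebra_simps)
  finally show ?thesis by (simp add: m_def)
qed

end

lemma (in prob_space) indep_var_of_indep_vars: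
  fixes X :: "'i \<Rightarrow> 'a \<Rightarrow> real"
  assumes "indep_vars (\<lambda>_. borel) X I" "i \<in> I" "j \<in> I" "i \<noteq> j"
  shows "indep_var borel (X i) borel (X j)"
  using indep_vars_sum[of "{j}" i X] indep_vars_subset[OF assms(1), of "{i, j}"] assms by simp

lemma (in prob_space) beta_difference_mgf_le:
  assumes "beta_rv M a b X" "beta_rv M a b Y" and indep: "indep_var borel X borel Y"
  shows "integrable M (\<lambda>\<omega>. exp (t * (X \<omega> - Y \<omega>)))"
    and "expectation (\<lambda>\<omega>. exp (t * (X \<omega> - Y \<omega>))) \<le> exp (t\<^sup>2 / (4 * (a + b)))"
proof -
  interpret X: beta_rv M a b X by fact
  interpret Y: beta_rv M a b Y by fact
  define m where "m = a / (a + b)"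
  have split: "exp (t * (X \<omega> - Y \<omega>)) = exp (t * (X \<omega> - m)) * exp (- t * (Y \<omega> - m))" for \<omega>
    by (simp add: mult_exp_exp algebra_simps)
  have ind: "indep_var borel (\<lambda>\<omega>. exp (t * (X \<omega> - m))) borel (\<lambda>\<omega>. exp (- t * (Y \<omega> - m)))"
    using indep_var_compose[OF indep, of "\<lambda>x. exp (t * (x - m))" borel "\<lambda>y. exp (- t * (y - m))" borel]
    by (simp add: comp_def)
  have int: "integrable M (\<lambda>\<omega>. exp (t * (X \<omega> - m)))" "integrable M (\<lambda>\<omega>. exp (- t * (Y \<omega> - m)))"
    by (intro X.integrable_comp Y.integrable_comp continuous_intros)+
  show "integrable M (\<lambda>\<omega>. exp (t * (X \<omega> - Y \<omega>)))"
    unfolding split using indep_var_integrable[OF ind int] .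
  have "expectation (\<lambda>\<omega>. exp (t * (X \<omega> - Y \<omega>)))
      = expectation (\<lambda>\<omega>. exp (t * (X \<omega> - m))) * expectation (\<lambda>\<omega>. exp (- t * (Y \<omega> - m)))"
    unfolding split using indep_var_lebesgue_integral[OF ind int] .
  also have "\<dots> \<le> exp (t\<^sup>2 / (8 * (a + b))) * exp ((- t)\<^sup>2 / (8 * (a + b)))"
    using X.mgf_le[of t] Y.mgf_le[of "- t"]
    by (intro mult_mono) (auto simp: m_def intro!: integral_nonneg_AE)
  also have "\<dots> = exp (t\<^sup>2 / (4 * (a + b)))"
    by (simp add: mult_exp_exp divide_simps)
  finally show "expectation (\<lambda>\<omega>. exp (t * (X \<omega> - Y \<omega>))) \<le> exp (t\<^sup>2 / (4 * (a + b)))" .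
qed

section \<open>Mutual information of a Beta--Bernoulli pair\<close>

lemma beta_bern_density_nonneg:
  assumes "0 < a" "0 < b"
  shows "0 \<le> beta_bern_density a b z"
proof (cases "0 < fst z \<and> fst z < 1")
  case True
  then show ?thesis
    using beta_density_nonneg[OF assms, of "fst z"]
    by (auto simp: beta_bern_density_def intro!: mult_nonneg_nonneg)
next
  case False
  then show ?thesis by (auto simp: beta_bern_density_def beta_density_def)
qed

lemma nn_integral_beta_bern_density:
  assumes "0 < a" "0 < b"
  shows "(\<integral>\<^sup>+x. ennreal (beta_bern_density a b (x, y)) \<partial>lborel)
           = ennreal (if y then a / (a + b) else b / (a + b))"
proof -
  define w where "w x = (if y then x else 1 - x) * beta_kernel a b x / Beta a b" for x
  have "(w has_integral (if y then a / (a + b) else b / (a + b))) {0..1}"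
    using has_integral_divide[OF has_integral_mult_beta_kernel(1)[OF assms], of "Beta a b"]
      has_integral_divide[OF has_integral_mult_beta_kernel(2)[OF assms], of "Beta a b"]
      Beta_real_pos[OF assms]
    by (cases y) (simp_all add: w_def[abs_def])
  then have "(w has_integral (if y then a / (a + b) else b / (a + b))) {0<..<1}"
    by (simp add: has_integral_Icc_iff_Ioo)
  moreover have "0 \<le> w x" if "x \<in> {0<..<1}" for x
    using that assms
    by (auto simp: w_def Beta_real_pos beta_kernel_nonneg intro!: divide_nonneg_pos mult_nonneg_nonneg)
  ultimately have "(\<integral>\<^sup>+x. ennreal (indicator {0<..<1} x * w x) \<partial>lborel)
      = ennreal (if y then a / (a + b) else b / (a + b))"
    by (intro nn_integral_has_integral_lebesgue) auto
  moreover have "beta_bern_density a b (x, y) = indicator {0<..<1} x * w x" for x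
    by (simp add: beta_bern_density_def beta_density_eq_kernel w_def)
  ultimately show ?thesis by simp
qed

lemma integrable_lborel_bool_if_bounded:
  fixes f :: "real \<times> bool \<Rightarrow> real"
  assumes [measurable]: "f \<in> borel_measurable (lborel \<Otimes>\<^sub>M count_space UNIV)"
    and bound: "\<And>x y. \<bar>f (x, y)\<bar> \<le> C * indicator {0..1} x"
  shows "integrable (lborel \<Otimes>\<^sub>M count_space UNIV) f"
proof (rule Bochner_Integration.integrable_bound)
  have "emeasure (lborel \<Otimes>\<^sub>M count_space UNIV) ({0..1::real} \<times> (UNIV :: bool set))
      = emeasure lborel {0..1::real} * emeasure (count_space UNIV) (UNIV :: bool set)"
    by (rule sigma_finite_measure.emeasure_pair_measure_Times[OF sigma_finite_measure_count_space]) auto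
  also have "\<dots> < \<infinity>"
    by (simp add: emeasure_count_space_finite ennreal_mult_less_top)
  finally show "integrable (lborel \<Otimes>\<^sub>M count_space UNIV)
      (\<lambda>z. C * indicator ({0..1::real} \<times> (UNIV :: bool set)) z)"
    by (intro integrable_mult_right integrable_real_indicator) auto
  show "AE z in lborel \<Otimes>\<^sub>M count_space UNIV.
      norm (f z) \<le> norm (C * indicator ({0..1::real} \<times> (UNIV :: bool set)) z)"
  proof (intro AE_I2)
    fix z :: "real \<times> bool"
    obtain x y where z: "z = (x, y)" by force
    then have "indicator ({0..1} \<times> UNIV) z = (indicator {0..1} x :: real)"
      by (simp add: indicator_def)
    then show "norm (f z) \<le> norm (C * indicator ({0..1::real} \<times> (UNIV :: bool set)) z)"
      using bound[of x y] z by simp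
  qed
qed measurable

lemma beta_bern_information_density:
  assumes "1 \<le> a" "1 \<le> b" "0 < m" "m < 1"
  shows "beta_bern_density a b z * log (exp 1)
      (beta_bern_density a b z / (beta_density a b (fst z) * (if snd z then m else 1 - m)))
    = beta_density a b (fst z)
      * (if snd z then fst z * ln (fst z / m) else (1 - fst z) * ln ((1 - fst z) / (1 - m)))"
proof (cases "fst z \<in> {0<..<1}")
  case True
  then have "0 < beta_density a b (fst z)"
    using assms Beta_real_pos[of a b] by (simp add: beta_density_def)
  with True assms show ?thesis
    by (auto simp: beta_bern_density_def log_def)
next
  case False
  then show ?thesis
    by (auto simp: beta_bern_density_def beta_density_def)
qed

lemma abs_beta_bern_information_density_le:
  assumes ab: "1 \<le> a" "1 \<le> b" and m: "0 < m" "m < 1"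
  shows "\<bar>beta_density a b x * (if y then x * ln (x / m) else (1 - x) * ln ((1 - x) / (1 - m)))\<bar>
    \<le> (2 + \<bar>ln m\<bar> + \<bar>ln (1 - m)\<bar>) / Beta a b * indicator {0..1} x"
    (is "\<bar>beta_density a b x * ?g\<bar> \<le> ?C / Beta a b * _")
proof (cases "x \<in> {0<..<1}")
  case True
  have "\<bar>?g\<bar> \<le> ?C"
    using abs_mult_ln_div_le[of x m] abs_mult_ln_div_le[of "1 - x" "1 - m"] True m by auto
  moreover have "beta_density a b x \<le> 1 / Beta a b"
    using True beta_kernel_le_1[OF ab, of x] Beta_real_pos[of a b] ab
    by (simp add: beta_density_eq_kernel divide_right_mono)
  moreover have "0 \<le> beta_density a b x"
    using ab by (simp add: beta_density_nonneg)
  ultimately have "beta_density a b x * \<bar>?g\<bar> \<le> 1 / Beta a b * ?C"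
    using Beta_real_pos[of a b] ab by (intro mult_mono) auto
  with True \<open>0 \<le> beta_density a b x\<close> show ?thesis
    by (simp add: abs_mult)
qed (use ab Beta_real_pos[of a b] in \<open>auto simp: beta_density_def\<close>)

locale beta_bernoulli_rv = beta_rv +
  fixes B :: "'a \<Rightarrow> bool"
  assumes joint_distributed:
    "distributed M (lborel \<Otimes>\<^sub>M count_space UNIV) (\<lambda>\<omega>. (X \<omega>, B \<omega>))
       (\<lambda>z. ennreal (beta_bern_density a b z))"
begin

lemma distributed_bernoulli:
  "distributed M (count_space UNIV) B (\<lambda>y. ennreal (if y then a / (a + b) else b / (a + b)))"
proof -
  have "distributed M (count_space UNIV) B
      (\<lambda>y. \<integral>\<^sup>+x. ennreal (beta_bern_density a b (x, y)) \<partial>lborel)"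
    by (rule distr_marginal2[OF lborel.sigma_finite_measure_axioms sigma_finite_measure_count_space
          joint_distributed])
  then show ?thesis
    using shape_ge_1 by (simp add: nn_integral_beta_bern_density)
qed

lemma mutual_information_eq_expectation_kl:
  "mutual_information (exp 1) lborel (count_space UNIV) X B
     = expectation (\<lambda>\<omega>. bernoulli_kl (X \<omega>) (a / (a + b)))"
proof -
  interpret information_space M "exp 1" by standard simp
  interpret pair_sigma_finite lborel "count_space UNIV :: bool measure"
    by (intro pair_sigma_finite.intro lborel.sigma_finite_measure_axioms
        sigma_finite_measure_count_space)
  define m where "m = a / (a + b)"
  have m: "0 < m" "m < 1" "1 - a / (a + b) = b / (a + b)"
    using shape_ge_1 by (auto simp: m_def field_simps)
  define f where "f z = beta_density a b (fst z)
      * (if snd z then fst z * ln (fst z / m) else (1 - fst z) * ln ((1 - fst z) / (1 - m)))" for z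
  have nonneg: "0 \<le> beta_density a b x" "0 \<le> beta_bern_density a b z" for x z
    using shape_ge_1 by (simp_all add: beta_density_nonneg beta_bern_density_nonneg)
  have [measurable]: "beta_density a b \<in> borel_measurable borel"
    using distributed_real_measurable[OF _ distributed] nonneg by simp
  have "distributed M (count_space UNIV) B (\<lambda>y. ennreal (if y then m else 1 - m))"
    using distributed_bernoulli unfolding m_def m(3) .
  then have "mutual_information (exp 1) lborel (count_space UNIV) X B
      = (\<integral>z. beta_bern_density a b z * log (exp 1) (beta_bern_density a b z
          / (beta_density a b (fst z) * (if snd z then m else 1 - m))) \<partial>(lborel \<Otimes>\<^sub>M count_space UNIV))"
    using nonneg m
    by (intro mutual_information_distr[OF lborel.sigma_finite_measure_axioms
          sigma_finite_measure_count_space distributed _ _ _ joint_distributed]) auto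
  also have "\<dots> = integral\<^sup>L (lborel \<Otimes>\<^sub>M count_space UNIV) f"
    by (intro Bochner_Integration.integral_cong refl)
       (simp add: f_def beta_bern_information_density[OF shape_ge_1 m(1,2)])
  also have "\<dots> = (\<integral>x. (\<integral>y. f (x, y) \<partial>count_space UNIV) \<partial>lborel)"
  proof (intro integral_fst'[symmetric] integrable_lborel_bool_if_bounded)
    show "f \<in> borel_measurable (lborel \<Otimes>\<^sub>M count_space UNIV)"
      unfolding f_def by measurable
    show "\<bar>f (x, y)\<bar> \<le> (2 + \<bar>ln m\<bar> + \<bar>ln (1 - m)\<bar>) / Beta a b * indicator {0..1} x" for x y
      unfolding f_def fst_conv snd_conv by (rule abs_beta_bern_information_density_le[OF shape_ge_1 m(1,2)])
  qed
  also have "\<dots> = (\<integral>x. beta_density a b x * bernoulli_kl x m \<partial>lborel)"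
    by (intro Bochner_Integration.integral_cong refl)
       (simp add: lebesgue_integral_count_space_finite UNIV_bool f_def bernoulli_kl_def algebra_simps)
  also have "\<dots> = expectation (\<lambda>\<omega>. bernoulli_kl (X \<omega>) m)"
    by (rule distributed_integral[OF distributed]) (auto simp: bernoulli_kl_def nonneg)
  finally show ?thesis by (simp add: m_def)
qed

lemma mutual_information_lower_bound:
  "1 \<le> 6 * (a + b) * mutual_information (exp 1) lborel (count_space UNIV) X B"
proof -
  define m where "m = a / (a + b)"
  have m: "0 < m" "m < 1"
    using shape_ge_1 by (auto simp: m_def)
  have "expectation (\<lambda>\<omega>. kl_cubic_minorant (X \<omega>) m) \<le> expectation (\<lambda>\<omega>. bernoulli_kl (X \<omega>) m)"
  proof (rule integral_mono_AE)
    show "integrable M (\<lambda>\<omega>. kl_cubic_minorant (X \<omega>) m)"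
      unfolding kl_cubic_minorant_def by (intro integrable_comp continuous_intros)
    show "integrable M (\<lambda>\<omega>. bernoulli_kl (X \<omega>) m)"
    proof (rule integrable_const_bound)
      show "AE \<omega> in M. norm (bernoulli_kl (X \<omega>) m) \<le> 2 + \<bar>ln m\<bar> + \<bar>ln (1 - m)\<bar>"
        using AE_in_unit_interval
        by eventually_elim (unfold real_norm_def, rule abs_bernoulli_kl_le, use m in auto)
    qed (simp add: bernoulli_kl_def)
    show "AE \<omega> in M. kl_cubic_minorant (X \<omega>) m \<le> bernoulli_kl (X \<omega>) m"
      using AE_in_unit_interval
      by eventually_elim (use m in \<open>simp add: kl_cubic_minorant_le_bernoulli_kl\<close>)
  qed
  then have "6 * (a + b) * expectation (\<lambda>\<omega>. kl_cubic_minorant (X \<omega>) m)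
      \<le> 6 * (a + b) * mutual_information (exp 1) lborel (count_space UNIV) X B"
    using shape_ge_1 by (simp add: mutual_information_eq_expectation_kl m_def)
  moreover have "1 \<le> 6 * (a + b) * expectation (\<lambda>\<omega>. kl_cubic_minorant (X \<omega>) m)"
    unfolding m_def expectation_kl_cubic_minorant using shape_ge_1 by (rule beta_cubic_minorant_bound)
  ultimately show ?thesis
    by linarith
qed

end

section \<open>The expected minimum\<close>

lemma abs_minus_le_exp_sum:
  fixes d s l :: real
  assumes "\<bar>d\<bar> \<le> 1" "0 \<le> s" "0 \<le> l"
  shows "\<bar>d\<bar> - s \<le> exp (l * d - l * s) + exp (- l * d - l * s)"
proof (cases "\<bar>d\<bar> \<le> s")
  case True
  then show ?thesis
    using exp_gt_zero[of "l * d - l * s"] exp_gt_zero[of "- l * d - l * s"] by linarith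
next
  case False
  then have "0 \<le> l * (\<bar>d\<bar> - s)"
    using assms by simp
  then have "0 \<le> l * d - l * s \<or> 0 \<le> - l * d - l * s"
    by (cases "0 \<le> d") (simp_all add: algebra_simps)
  then have "1 \<le> exp (l * d - l * s) + exp (- l * d - l * s)"
    by (auto intro: add_increasing add_increasing2)
  then show ?thesis
    using assms by linarith
qed

lemma (in prob_space) exponential_majorant_of_deviation:
  fixes D :: "'a \<Rightarrow> real"
  assumes int: "\<And>t. integrable M (\<lambda>\<omega>. exp (t * D \<omega>))"
    and mgf: "\<And>t. expectation (\<lambda>\<omega>. exp (t * D \<omega>)) \<le> exp (t\<^sup>2 / (4 * \<nu>))"
    and bounded: "AE \<omega> in M. \<bar>D \<omega>\<bar> \<le> 1" and \<nu>: "0 < \<nu>" and s: "0 \<le> s"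
  obtains g where "integrable M g" "expectation g \<le> 2 * exp (- (\<nu> * s\<^sup>2))"
    "AE \<omega> in M. 0 \<le> g \<omega> \<and> \<bar>D \<omega>\<bar> - s \<le> g \<omega>"
proof
  \<comment> \<open>\<open>l\<close> minimises the Chernoff exponent \<open>- l s + l\<^sup>2 / (4 \<nu>)\<close>.\<close>
  define l where "l = 2 * \<nu> * s"
  define g where "g \<omega> = exp (l * D \<omega> - l * s) + exp (- l * D \<omega> - l * s)" for \<omega>
  have shift: "(\<lambda>\<omega>. exp (t * D \<omega> - l * s)) = (\<lambda>\<omega>. exp (- (l * s)) * exp (t * D \<omega>))" for t
    by (simp add: exp_diff exp_minus field_simps)
  have int_shift: "integrable M (\<lambda>\<omega>. exp (t * D \<omega> - l * s))" for t
    unfolding shift by (intro integrable_mult_right int)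
  have E_shift: "expectation (\<lambda>\<omega>. exp (t * D \<omega> - l * s)) \<le> exp (- (\<nu> * s\<^sup>2))"
    if "t = l \<or> t = - l" for t
  proof -
    have "expectation (\<lambda>\<omega>. exp (t * D \<omega> - l * s)) \<le> exp (- (l * s)) * exp (t\<^sup>2 / (4 * \<nu>))"
      unfolding shift by (simp add: mgf)
    also have "\<dots> = exp (- (\<nu> * s\<^sup>2))"
      using that \<nu> by (auto simp: mult_exp_exp l_def power2_eq_square field_simps)
    finally show ?thesis .
  qed
  show "integrable M g"
    unfolding g_def by (intro Bochner_Integration.integrable_add int_shift)
  have "expectation g = expectation (\<lambda>\<omega>. exp (l * D \<omega> - l * s))
      + expectation (\<lambda>\<omega>. exp (- l * D \<omega> - l * s))"
    unfolding g_def by (intro Bochner_Integration.integral_add int_shift)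
  also have "\<dots> \<le> 2 * exp (- (\<nu> * s\<^sup>2))"
    using E_shift[of l] E_shift[of "- l"] by simp
  finally show "expectation g \<le> 2 * exp (- (\<nu> * s\<^sup>2))" .
  have "0 \<le> l"
    using \<nu> s by (simp add: l_def)
  show "AE \<omega> in M. 0 \<le> g \<omega> \<and> \<bar>D \<omega>\<bar> - s \<le> g \<omega>"
    using bounded
  proof eventually_elim
    case (elim \<omega>)
    with abs_minus_le_exp_sum[OF elim s \<open>0 \<le> l\<close>] show ?case
      by (simp add: g_def add_nonneg_nonneg)
  qed
qed

lemma (in prob_space) expectation_Min_nonneg:
  fixes h :: "'i \<Rightarrow> 'a \<Rightarrow> real" and \<epsilon> :: "'i \<Rightarrow> real"
  assumes J: "finite J" "J \<noteq> {}"
    and majorant: "\<And>n. n \<in> J \<Longrightarrow> \<exists>g. integrable M g \<and> expectation g \<le> \<epsilon> n \<and>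
                     (AE \<omega> in M. 0 \<le> g \<omega> \<and> h n \<omega> \<le> g \<omega>)"
    and budget: "sum \<epsilon> J \<le> c"
  shows "0 \<le> expectation (\<lambda>\<omega>. Min ((\<lambda>n. c - h n \<omega>) ` J))"
proof (cases "integrable M (\<lambda>\<omega>. Min ((\<lambda>n. c - h n \<omega>) ` J))")
  case True
  from bchoice[OF ballI[OF majorant]] obtain g where g: "\<forall>n\<in>J. integrable M (g n) \<and>
      expectation (g n) \<le> \<epsilon> n \<and> (AE \<omega> in M. 0 \<le> g n \<omega> \<and> h n \<omega> \<le> g n \<omega>)"
    ..
  have "AE \<omega> in M. \<forall>n\<in>J. 0 \<le> g n \<omega> \<and> h n \<omega> \<le> g n \<omega>"
    using J g by (simp add: AE_finite_all)
  then have "AE \<omega> in M. c - (\<Sum>n\<in>J. g n \<omega>) \<le> Min ((\<lambda>n. c - h n \<omega>) ` J)"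
  proof eventually_elim
    case (elim \<omega>)
    have "c - (\<Sum>n\<in>J. g n \<omega>) \<le> c - h k \<omega>" if "k \<in> J" for k
      using member_le_sum[of k J "\<lambda>n. g n \<omega>"] elim J that by force
    then show ?case using J by simp
  qed
  then have "expectation (\<lambda>\<omega>. c - (\<Sum>n\<in>J. g n \<omega>)) \<le> expectation (\<lambda>\<omega>. Min ((\<lambda>n. c - h n \<omega>) ` J))"
    using g by (intro integral_mono_AE True) auto
  moreover have "expectation (\<lambda>\<omega>. c - (\<Sum>n\<in>J. g n \<omega>)) = c - (\<Sum>n\<in>J. expectation (g n))"
    using g by (simp add: Bochner_Integration.integral_diff Bochner_Integration.integral_sum prob_space)
  moreover have "(\<Sum>n\<in>J. expectation (g n)) \<le> sum \<epsilon> J"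
    using g by (intro sum_mono) blast
  ultimately show ?thesis using budget by linarith
next
  case False
  then show ?thesis by (simp add: not_integrable_integral_eq)
qed

lemma (in prob_space) beta_deviation_majorant:
  assumes "beta_bernoulli_rv M a b X B" "beta_rv M a b Y" "indep_var borel X borel Y" "0 < L"
  shows "\<exists>g. integrable M g \<and> expectation g \<le> 2 * exp (- L) \<and>
    (AE \<omega> in M. 0 \<le> g \<omega> \<and>
       \<bar>X \<omega> - Y \<omega>\<bar> - sqrt (6 * mutual_information (exp 1) lborel (count_space UNIV) X B * L) \<le> g \<omega>)"
proof -
  interpret X: beta_bernoulli_rv M a b X B by fact
  interpret Y: beta_rv M a b Y by fact
  define I where "I = mutual_information (exp 1) lborel (count_space UNIV) X B"
  have \<nu>: "0 < a + b" using X.shape_ge_1 by simp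
  have "1 \<le> 6 * (a + b) * I"
    unfolding I_def by (rule X.mutual_information_lower_bound)
  then have I: "0 \<le> I" using \<nu> by (smt (verit) mult_nonneg_nonpos mult_pos_pos)
  have bounded: "AE \<omega> in M. \<bar>X \<omega> - Y \<omega>\<bar> \<le> 1"
    using X.AE_in_unit_interval Y.AE_in_unit_interval by eventually_elim auto
  have s: "0 \<le> sqrt (6 * I * L)"
    using I assms(4) by simp
  note mgf = beta_difference_mgf_le[OF X.beta_rv_axioms Y.beta_rv_axioms assms(3)]
  obtain g where g: "integrable M g" "expectation g \<le> 2 * exp (- ((a + b) * (sqrt (6 * I * L))\<^sup>2))"
    "AE \<omega> in M. 0 \<le> g \<omega> \<and> \<bar>X \<omega> - Y \<omega>\<bar> - sqrt (6 * I * L) \<le> g \<omega>"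
    by (rule exponential_majorant_of_deviation[OF mgf bounded \<nu> s])
  have "L \<le> (a + b) * (sqrt (6 * I * L))\<^sup>2"
    using mult_right_mono[OF \<open>1 \<le> 6 * (a + b) * I\<close>, of L] I assms(4) by (simp add: mult_ac)
  then have "2 * exp (- ((a + b) * (sqrt (6 * I * L))\<^sup>2)) \<le> 2 * exp (- L)"
    by simp
  with g(2) have "expectation g \<le> 2 * exp (- L)"
    by linarith
  with g(1,3) show ?thesis
    unfolding I_def by blast
qed

theorem lemma6:
  fixes M :: "'a measure"
    and N :: nat
    and \<alpha> \<beta> :: "nat \<Rightarrow> real"
    and p ph :: "nat \<Rightarrow> 'a \<Rightarrow> real"
    and b :: "nat \<Rightarrow> 'a \<Rightarrow> bool"
    and \<delta> :: real
  assumes "prob_space M"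
    and "N > 0"
    and "\<And>n. n \<in> {1..N} \<Longrightarrow> \<alpha> n \<ge> 1 \<and> \<beta> n \<ge> 1"
    and "\<And>n. n \<in> {1..N} \<Longrightarrow>
           distributed M lborel (p n) (\<lambda>x. ennreal (beta_density (\<alpha> n) (\<beta> n) x))"
    and "\<And>n. n \<in> {1..N} \<Longrightarrow>
           distributed M lborel (ph n) (\<lambda>x. ennreal (beta_density (\<alpha> n) (\<beta> n) x))"
    and "prob_space.indep_vars M (\<lambda>_. borel)
           (\<lambda>(n, k). if k then ph n else p n) ({1..N} \<times> (UNIV :: bool set))"
    and "\<And>n. n \<in> {1..N} \<Longrightarrow>
           distributed M (lborel \<Otimes>\<^sub>M count_space UNIV) (\<lambda>\<omega>. (p n \<omega>, b n \<omega>))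
             (\<lambda>z. ennreal (beta_bern_density (\<alpha> n) (\<beta> n) z))"
    and "0 < \<delta>" and "\<delta> < 1"
  shows "prob_space.expectation M
           (\<lambda>\<omega>. Min ((\<lambda>n. sqrt (6 * prob_space.mutual_information M (exp 1) lborel
                                        (count_space UNIV) (p n) (b n)
                                   * ln (2 * real N / \<delta>))
                           - \<bar>p n \<omega> - ph n \<omega>\<bar> + \<delta>) ` {1..N})) \<ge> 0"
proof -
  interpret prob_space M by fact
  define L where "L = ln (2 * real N / \<delta>)"
  have L: "0 < L" "2 * exp (- L) = \<delta> / real N"
    using assms(2,8,9) by (simp_all add: L_def exp_minus)
  define h where "h n \<omega> = \<bar>p n \<omega> - ph n \<omega>\<bar>
    - sqrt (6 * mutual_information (exp 1) lborel (count_space UNIV) (p n) (b n) * L)" for n \<omega>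
  have majorant: "\<exists>g. integrable M g \<and> expectation g \<le> \<delta> / real N \<and>
      (AE \<omega> in M. 0 \<le> g \<omega> \<and> h n \<omega> \<le> g \<omega>)" if n: "n \<in> {1..N}" for n
  proof -
    have "beta_bernoulli_rv M (\<alpha> n) (\<beta> n) (p n) (b n)" "beta_rv M (\<alpha> n) (\<beta> n) (ph n)"
      using n assms(3,4,5,7) by unfold_locales auto
    moreover have "indep_var borel (p n) borel (ph n)"
      using indep_var_of_indep_vars[OF assms(6), of "(n, False)" "(n, True)"] n by simp
    ultimately have "\<exists>g. integrable M g \<and> expectation g \<le> 2 * exp (- L) \<and>
        (AE \<omega> in M. 0 \<le> g \<omega> \<and> h n \<omega> \<le> g \<omega>)"
      unfolding h_def by (rule beta_deviation_majorant[OF _ _ _ L(1)])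
    then show ?thesis
      unfolding L(2) .
  qed
  have "sum (\<lambda>_. \<delta> / real N) {1..N} \<le> \<delta>"
    using assms(2) by simp
  with assms(2) have "0 \<le> expectation (\<lambda>\<omega>. Min ((\<lambda>n. \<delta> - h n \<omega>) ` {1..N}))"
    by (intro expectation_Min_nonneg[OF _ _ majorant]) auto
  also have "(\<lambda>\<omega>. Min ((\<lambda>n. \<delta> - h n \<omega>) ` {1..N}))
      = (\<lambda>\<omega>. Min ((\<lambda>n. sqrt (6 * mutual_information (exp 1) lborel (count_space UNIV) (p n) (b n)
          * ln (2 * real N / \<delta>)) - \<bar>p n \<omega> - ph n \<omega>\<bar> + \<delta>) ` {1..N}))"
    by (intro ext arg_cong[where f = Min] image_cong refl) (simp add: h_def L_def)
  finally show ?thesis .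
qed

end
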